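(* Every finite graph $G$ with pathwidth $p$ is homomorphic to an interval graph $H$ with $\omega(H)\leq p+1$ and $\mathrm{FF}(G)\leq \mathrm{FF}(H)$.
   Context: A path decomposition of a graph $G$ is a sequence $B_1,\dots,B_m$ of vertex subsets such that each vertex lies in a nonempty set of consecutive $B_i$'s and each edge has both endpoints in some $B_i$; its width is $\max_i |B_i|-1$, and the pathwidth of $G$ is the minimum width of a path decomposition. An interval graph is the intersection graph of a finite set of closed real intervals. $\omega(H)$ is the maximum size of a clique in $H$. A First-Fit coloring of a graph $G$ is a proper coloring of the vertices with positive integers such that every vertex colored $i\geq 2$ has a neighbor colored $j$ for every $j\in\{1,\dots,i-1\}$; $\mathrm{FF}(G)$ is the maximum number of colors used in a First-Fit coloring of $G$. A homomorphism from $G$ to $H$ is a map $f:V(G)\to V(H)$ with $f(u)f(v)\in E(H)$ for every edge $uv\in E(G)$. *)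

theory Defs
  imports Complex_Main
begin

definition fin_graph :: "'a set \<Rightarrow> ('a \<Rightarrow> 'a \<Rightarrow> bool) \<Rightarrow> bool" where
  "fin_graph V E \<longleftrightarrow> finite V \<and>
     (\<forall>u v. E u v \<longrightarrow> u \<in> V \<and> v \<in> V \<and> u \<noteq> v \<and> E v u)"

definition path_decomp :: "'a set \<Rightarrow> ('a \<Rightarrow> 'a \<Rightarrow> bool) \<Rightarrow> 'a set list \<Rightarrow> bool" where
  "path_decomp V E Bs \<longleftrightarrow> Bs \<noteq> [] \<and> (\<forall>B\<in>set Bs. B \<subseteq> V) \<and>
     (\<forall>v\<in>V. \<exists>i j. i \<le> j \<and> j < length Bs \<and>
        (\<forall>k<length Bs. v \<in> Bs ! k \<longleftrightarrow> i \<le> k \<and> k \<le> j)) \<and>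
     (\<forall>u v. E u v \<longrightarrow> (\<exists>i<length Bs. u \<in> Bs ! i \<and> v \<in> Bs ! i))"

definition pd_width :: "'a set list \<Rightarrow> int" where
  "pd_width Bs = Max ((\<lambda>B. int (card B) - 1) ` set Bs)"

definition pathwidth :: "'a set \<Rightarrow> ('a \<Rightarrow> 'a \<Rightarrow> bool) \<Rightarrow> int" where
  "pathwidth V E = Min {pd_width Bs | Bs. path_decomp V E Bs}"

definition interval_graph :: "'b set \<Rightarrow> ('b \<Rightarrow> 'b \<Rightarrow> bool) \<Rightarrow> bool" where
  "interval_graph V E \<longleftrightarrow> fin_graph V E \<and>
     (\<exists>a b :: 'b \<Rightarrow> real. (\<forall>v\<in>V. a v \<le> b v) \<and> inj_on (\<lambda>v. (a v, b v)) V \<and>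
        (\<forall>u\<in>V. \<forall>v\<in>V. u \<noteq> v \<longrightarrow> (E u v \<longleftrightarrow> {a u..b u} \<inter> {a v..b v} \<noteq> {})))"

definition clique_number :: "'a set \<Rightarrow> ('a \<Rightarrow> 'a \<Rightarrow> bool) \<Rightarrow> nat" where
  "clique_number V E = Max {card K | K. K \<subseteq> V \<and> (\<forall>u\<in>K. \<forall>v\<in>K. u \<noteq> v \<longrightarrow> E u v)}"

definition ff_coloring :: "'a set \<Rightarrow> ('a \<Rightarrow> 'a \<Rightarrow> bool) \<Rightarrow> ('a \<Rightarrow> nat) \<Rightarrow> bool" where
  "ff_coloring V E c \<longleftrightarrow> (\<forall>v\<in>V. 1 \<le> c v) \<and>
     (\<forall>u v. E u v \<longrightarrow> c u \<noteq> c v) \<and>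
     (\<forall>v\<in>V. \<forall>j. 1 \<le> j \<and> j < c v \<longrightarrow> (\<exists>u. E v u \<and> c u = j))"

definition FF :: "'a set \<Rightarrow> ('a \<Rightarrow> 'a \<Rightarrow> bool) \<Rightarrow> nat" where
  "FF V E = Max {card (c ` V) | c. ff_coloring V E c}"

definition graph_hom :: "'a set \<Rightarrow> ('a \<Rightarrow> 'a \<Rightarrow> bool) \<Rightarrow> 'b set \<Rightarrow> ('b \<Rightarrow> 'b \<Rightarrow> bool)
    \<Rightarrow> ('a \<Rightarrow> 'b) \<Rightarrow> bool" where
  "graph_hom V E W F f \<longleftrightarrow> (\<forall>v\<in>V. f v \<in> W) \<and> (\<forall>u v. E u v \<longrightarrow> F (f u) (f v))"

end

theory Submission
  imports Defs "HOL-Library.Nat_Bijection"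
begin

text \<open>Fix a path decomposition \<open>B\<^sub>0, \<dots>, B\<^sub>n\<close> of minimum width and a First-Fit colouring
  \<open>c\<close> of \<open>G\<close> with \<open>FF(G)\<close> colours. For each colour \<open>i\<close>, the indices of the bags meeting the
  colour class \<open>i\<close> split into maximal runs of consecutive integers; these runs, over all colours,
  are the intervals of \<open>H\<close>, and each vertex is mapped to the run of its colour containing its
  own span of bags. Adjacent vertices share a bag and get distinct colours, so this is a
  homomorphism, and colouring each run by its colour is again a First-Fit colouring with
  \<open>FF(G)\<close> colours. Runs of one colour are disjoint, so a clique of \<open>H\<close> consists of runs of
  distinct colours through a common index \<open>m\<close> (Helly), each contributing a distinct vertex
  of \<open>B\<^sub>m\<close>; hence \<open>\<omega>(H) \<le> |B\<^sub>m| \<le> p + 1\<close>.\<close>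

definition run :: "nat set \<Rightarrow> nat \<Rightarrow> nat set" where
  "run U x = {m. {min x m..max x m} \<subseteq> U}"

lemma mem_run_self: "x \<in> U \<Longrightarrow> x \<in> run U x"
  unfolding run_def by auto

lemma run_subset: "run U x \<subseteq> U"
  unfolding run_def by auto

lemma run_eq_if_mem:
  assumes "y \<in> run U x"
  shows "run U y = run U x"
proof -
  have xy: "{min x y..max x y} \<subseteq> U" using assms unfolding run_def by simp
  have "{min x m..max x m} \<subseteq> U \<longleftrightarrow> {min y m..max y m} \<subseteq> U" for m
  proof -
    have "{min x m..max x m} \<subseteq> {min x y..max x y} \<union> {min y m..max y m}"
         "{min y m..max y m} \<subseteq> {min x y..max x y} \<union> {min x m..max x m}"
      by (auto simp: min_def max_def)
    then show ?thesis using xy by (meson Un_least subset_trans)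
  qed
  then show ?thesis unfolding run_def by simp
qed

lemma run_eq_atLeastAtMost:
  assumes "finite U" "x \<in> U"
  shows "run U x = {Min (run U x)..Max (run U x)}"
proof -
  let ?a = "Min (run U x)" and ?b = "Max (run U x)"
  have fin: "finite (run U x)" by (rule finite_subset[OF run_subset assms(1)])
  have ne: "run U x \<noteq> {}" using mem_run_self[OF assms(2)] by blast
  have a: "{min x ?a..max x ?a} \<subseteq> U" and b: "{min x ?b..max x ?b} \<subseteq> U"
    using Min_in[OF fin ne] Max_in[OF fin ne] unfolding run_def by auto
  have "k \<in> run U x" if "?a \<le> k" "k \<le> ?b" for k
  proof -
    have "{min x k..max x k} \<subseteq> {min x ?a..max x ?a} \<union> {min x ?b..max x ?b}"
      using that by (auto simp: min_def max_def)
    with a b show ?thesis unfolding run_def by blast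
  qed
  moreover have "run U x \<subseteq> {?a..?b}" using fin by auto
  ultimately show ?thesis by auto
qed

lemma common_point_if_intervals_pairwise_meet:
  fixes lo hi :: "'b \<Rightarrow> 'a::linorder"
  assumes "finite K" "K \<noteq> {}" "\<And>x y. x \<in> K \<Longrightarrow> y \<in> K \<Longrightarrow> lo x \<le> hi y"
  shows "\<exists>m. \<forall>x\<in>K. lo x \<le> m \<and> m \<le> hi x"
proof -
  have "Max (lo ` K) \<in> lo ` K" using assms(1,2) by simp
  then obtain y where "y \<in> K" "Max (lo ` K) = lo y" by blast
  moreover have "lo x \<le> Max (lo ` K)" if "x \<in> K" for x using assms(1) that by simp
  ultimately show ?thesis using assms(3) by metis
qed

lemma of_nat_le_perturbed_iff:
  fixes d e :: real and s t :: nat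
  assumes "0 \<le> d" "d < 1/2" "0 \<le> e" "e < 1/2"
  shows "real s - d \<le> real t + e \<longleftrightarrow> s \<le> t"
proof
  assume "real s - d \<le> real t + e"
  then have "real s < real t + 1" using assms by linarith
  then show "s \<le> t" by linarith
qed (use assms in auto)

lemma interval_graph_of_nat_intervals:
  fixes W :: "'b set" and lo hi col :: "'b \<Rightarrow> nat"
  assumes "finite W" and lo_le_hi: "\<And>x. x \<in> W \<Longrightarrow> lo x \<le> hi x"
    and inj: "inj_on (\<lambda>x. (col x, lo x)) W"
    and F: "\<And>x y. F x y \<longleftrightarrow> x \<in> W \<and> y \<in> W \<and> x \<noteq> y \<and> {lo x..hi x} \<inter> {lo y..hi y} \<noteq> {}"
  shows "interval_graph W F"
proof -
  txt \<open>Moving endpoints by less than \<open>1/2\<close> neither creates nor destroys an intersection of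
    integer intervals; making the amount depend on the colour separates intervals that share
    their left end.\<close>
  define \<delta> :: "nat \<Rightarrow> real" where "\<delta> i = 1 / (real i + 3)" for i
  have \<delta>: "0 \<le> \<delta> i" "\<delta> i < 1/2" for i unfolding \<delta>_def by (auto simp: field_simps)
  have \<delta>_inj: "\<delta> i = \<delta> j \<Longrightarrow> i = j" for i j unfolding \<delta>_def by (auto simp: field_simps)
  define a where "a x = real (lo x) - \<delta> (col x)" for x
  define b where "b x = real (hi x) + \<delta> (col x)" for x
  have le_iff: "a x \<le> b y \<longleftrightarrow> lo x \<le> hi y" for x y
    unfolding a_def b_def by (rule of_nat_le_perturbed_iff[OF \<delta> \<delta>])
  have ab: "a x \<le> b x" if "x \<in> W" for x using le_iff lo_le_hi[OF that] by blast
  have "inj_on (\<lambda>x. (a x, b x)) W"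
  proof (rule inj_onI)
    fix x y assume "x \<in> W" "y \<in> W" "(a x, b x) = (a y, b y)"
    then have eq: "real (lo x) - \<delta> (col x) = real (lo y) - \<delta> (col y)" unfolding a_def by simp
    then have "\<bar>real (lo x) - real (lo y)\<bar> < 1" using \<delta>[of "col x"] \<delta>[of "col y"] by linarith
    then have "lo x = lo y" by linarith
    with eq have "col x = col y" using \<delta>_inj by simp
    with \<open>lo x = lo y\<close> show "x = y" using inj \<open>x \<in> W\<close> \<open>y \<in> W\<close> by (auto dest: inj_onD)
  qed
  moreover have "F x y \<longleftrightarrow> {a x..b x} \<inter> {a y..b y} \<noteq> {}" if "x \<in> W" "y \<in> W" "x \<noteq> y" for x y
    using F[of x y] that ab le_iff lo_le_hi by auto
  moreover have "fin_graph W F" using assms(1) F unfolding fin_graph_def by blast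
  ultimately show ?thesis unfolding interval_graph_def using ab by blast
qed

definition proper_colouring :: "'a set \<Rightarrow> ('a \<Rightarrow> 'a \<Rightarrow> bool) \<Rightarrow> ('a \<Rightarrow> nat) \<Rightarrow> bool" where
  "proper_colouring V E c \<longleftrightarrow> (\<forall>v\<in>V. 1 \<le> c v) \<and> (\<forall>u v. E u v \<longrightarrow> c u \<noteq> c v)"

lemma proper_colouring_recolour:
  assumes "fin_graph V E" "proper_colouring V E c" "1 \<le> j" "\<not> (\<exists>u. E v u \<and> c u = j)"
  shows "proper_colouring V E (c(v := j))"
  using assms unfolding proper_colouring_def fin_graph_def by auto

lemma ff_coloring_exists:
  assumes G: "fin_graph V E"
  shows "\<exists>c. ff_coloring V E c"
proof -
  have fin: "finite V" and edge: "\<And>u v. E u v \<Longrightarrow> u \<in> V \<and> v \<in> V \<and> u \<noteq> v"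
    using G unfolding fin_graph_def by auto
  obtain h where h: "bij_betw h V {0..<card V}" using ex_bij_betw_finite_nat[OF fin] by blast
  have "proper_colouring V E (\<lambda>v. h v + 1)"
    unfolding proper_colouring_def using h edge by (auto simp: bij_betw_def inj_on_def)
  then obtain c where proper: "proper_colouring V E c"
    and least: "\<And>d. proper_colouring V E d \<Longrightarrow> (\<Sum>v\<in>V. c v) \<le> (\<Sum>v\<in>V. d v)"
    using ex_has_least_nat[where m = "\<lambda>c. \<Sum>v\<in>V. c v"] by blast
  have "\<exists>u. E v u \<and> c u = j" if "v \<in> V" "1 \<le> j" "j < c v" for v j
  proof (rule ccontr)
    assume "\<not> (\<exists>u. E v u \<and> c u = j)"
    then have "proper_colouring V E (c(v := j))"
      using proper_colouring_recolour[OF G proper \<open>1 \<le> j\<close>] by blast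
    moreover have "(\<Sum>w\<in>V. (c(v := j)) w) < (\<Sum>w\<in>V. c w)"
      using that fin by (intro sum_strict_mono_ex1) auto
    ultimately show False using least by (meson leD)
  qed
  with proper show ?thesis unfolding ff_coloring_def proper_colouring_def by blast
qed

lemma finite_ff_colour_counts:
  assumes "finite V"
  shows "finite {card (c ` V) | c. ff_coloring V E c}"
proof -
  have "{card (c ` V) | c. ff_coloring V E c} \<subseteq> {..card V}" using card_image_le[OF assms] by auto
  then show ?thesis by (rule finite_subset) simp
qed

lemma FF_attained:
  assumes "fin_graph V E"
  shows "\<exists>c. ff_coloring V E c \<and> FF V E = card (c ` V)"
proof -
  have "finite V" using assms unfolding fin_graph_def by simp
  then have "FF V E \<in> {card (c ` V) | c. ff_coloring V E c}"
    unfolding FF_def using ff_coloring_exists[OF assms] finite_ff_colour_counts by (intro Max_in) auto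
  then show ?thesis by auto
qed

lemma card_image_le_FF:
  assumes "finite V" "ff_coloring V E c"
  shows "card (c ` V) \<le> FF V E"
  unfolding FF_def using assms finite_ff_colour_counts by (intro Max_ge) auto

lemma card_le_pd_width:
  assumes "B \<in> set Bs"
  shows "int (card B) \<le> pd_width Bs + 1"
proof -
  have "int (card B) - 1 \<le> pd_width Bs"
    unfolding pd_width_def using assms by (auto intro: Max_ge)
  then show ?thesis by simp
qed

lemma pathwidth_attained:
  assumes G: "fin_graph V E"
  shows "\<exists>Bs. path_decomp V E Bs \<and> pd_width Bs = pathwidth V E"
proof -
  let ?S = "{pd_width Bs | Bs. path_decomp V E Bs}"
  have "path_decomp V E [V]"
    using G unfolding path_decomp_def fin_graph_def by (auto intro!: exI[of _ 0])
  then have "?S \<noteq> {}" by auto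
  moreover have "?S \<subseteq> {-1..int (card V)}"
  proof
    fix w assume "w \<in> ?S"
    then obtain Bs where Bs: "path_decomp V E Bs" "w = pd_width Bs" by auto
    then have "pd_width Bs \<in> (\<lambda>B. int (card B) - 1) ` set Bs"
      unfolding pd_width_def path_decomp_def by (intro Max_in) auto
    then obtain B where B: "B \<in> set Bs" "pd_width Bs = int (card B) - 1" by auto
    have "card B \<le> card V"
      using B(1) Bs(1) G unfolding path_decomp_def fin_graph_def by (auto intro: card_mono)
    then show "w \<in> {-1..int (card V)}" using B Bs(2) by auto
  qed
  then have "finite ?S" by (rule finite_subset) simp
  ultimately have "pathwidth V E \<in> ?S" unfolding pathwidth_def by (rule Min_in[rotated])
  then show ?thesis by auto
qed

lemma path_decomp_spans:
  assumes "path_decomp V E Bs"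
  obtains l r where "\<And>v. v \<in> V \<Longrightarrow> l v \<le> r v \<and> r v < length Bs \<and>
           (\<forall>k<length Bs. v \<in> Bs ! k \<longleftrightarrow> l v \<le> k \<and> k \<le> r v)"
proof -
  have "\<forall>v\<in>V. \<exists>l r. l \<le> r \<and> r < length Bs \<and> (\<forall>k<length Bs. v \<in> Bs ! k \<longleftrightarrow> l \<le> k \<and> k \<le> r)"
    using assms unfolding path_decomp_def by blast
  from bchoice[OF this] obtain l where "\<forall>v\<in>V. \<exists>r. l v \<le> r \<and> r < length Bs \<and>
      (\<forall>k<length Bs. v \<in> Bs ! k \<longleftrightarrow> l v \<le> k \<and> k \<le> r)"
    by blast
  from bchoice[OF this] obtain r where "\<forall>v\<in>V. l v \<le> r v \<and> r v < length Bs \<and>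
      (\<forall>k<length Bs. v \<in> Bs ! k \<longleftrightarrow> l v \<le> k \<and> k \<le> r v)"
    by blast
  then show thesis using that by blast
qed

lemma clique_number_attained:
  assumes "finite W"
  obtains K where "K \<subseteq> W" "\<forall>u\<in>K. \<forall>v\<in>K. u \<noteq> v \<longrightarrow> F u v" "card K = clique_number W F"
proof -
  let ?S = "{card K | K. K \<subseteq> W \<and> (\<forall>u\<in>K. \<forall>v\<in>K. u \<noteq> v \<longrightarrow> F u v)}"
  have "?S \<subseteq> {..card W}" using assms by (auto intro: card_mono)
  then have "finite ?S" by (rule finite_subset) simp
  moreover have "?S \<noteq> {}" by (auto intro!: exI[of _ "{}"])
  ultimately have "Max ?S \<in> ?S" by (rule Max_in)
  then obtain K where K: "K \<subseteq> W" "\<forall>u\<in>K. \<forall>v\<in>K. u \<noteq> v \<longrightarrow> F u v"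
    and "card K = Max ?S" by auto
  then have "card K = clique_number W F" unfolding clique_number_def by simp
  with K show thesis by (rule that)
qed

locale coloured_path_decomp =
  fixes V :: "'a set" and E :: "'a \<Rightarrow> 'a \<Rightarrow> bool" and Bs :: "'a set list"
    and c :: "'a \<Rightarrow> nat" and l r :: "'a \<Rightarrow> nat"
  assumes graph: "fin_graph V E" and decomp: "path_decomp V E Bs" and ff: "ff_coloring V E c"
    and span: "\<And>v. v \<in> V \<Longrightarrow> l v \<le> r v \<and> r v < length Bs \<and>
                 (\<forall>k<length Bs. v \<in> Bs ! k \<longleftrightarrow> l v \<le> k \<and> k \<le> r v)"
begin

definition colour_indices :: "nat \<Rightarrow> nat set" where
  "colour_indices i = {k. \<exists>v\<in>V. c v = i \<and> l v \<le> k \<and> k \<le> r v}"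

definition vertex_run :: "'a \<Rightarrow> nat set" where
  "vertex_run v = run (colour_indices (c v)) (l v)"

text \<open>A vertex of \<open>H\<close> is a colour together with a maximal run of that colour, encoded as
  the pair (colour, left end of the run).\<close>

definition node :: "'a \<Rightarrow> nat" where
  "node v = prod_encode (c v, Min (vertex_run v))"

definition nodes :: "nat set" where
  "nodes = node ` V"

definition node_colour :: "nat \<Rightarrow> nat" where
  "node_colour x = fst (prod_decode x)"

definition node_start :: "nat \<Rightarrow> nat" where
  "node_start x = snd (prod_decode x)"

definition node_run :: "nat \<Rightarrow> nat set" where
  "node_run x = run (colour_indices (node_colour x)) (node_start x)"

definition node_end :: "nat \<Rightarrow> nat" where
  "node_end x = Max (node_run x)"

definition adj :: "nat \<Rightarrow> nat \<Rightarrow> bool" where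
  "adj x y \<longleftrightarrow> x \<in> nodes \<and> y \<in> nodes \<and> x \<noteq> y \<and> node_run x \<inter> node_run y \<noteq> {}"

lemma finite_colour_indices: "finite (colour_indices i)"
proof -
  have "colour_indices i \<subseteq> {..<length Bs}" unfolding colour_indices_def using span by fastforce
  then show ?thesis by (rule finite_subset) simp
qed

lemma mem_vertex_run:
  assumes "v \<in> V" "l v \<le> m" "m \<le> r v"
  shows "m \<in> vertex_run v"
  using assms unfolding vertex_run_def run_def colour_indices_def by auto

lemma finite_vertex_run: "finite (vertex_run v)"
  unfolding vertex_run_def by (rule finite_subset[OF run_subset finite_colour_indices])

lemma vertex_run_nonempty: "v \<in> V \<Longrightarrow> vertex_run v \<noteq> {}"
  using mem_vertex_run span by blast

lemma node_colour_node [simp]: "node_colour (node v) = c v"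
  unfolding node_colour_def node_def by simp

lemma node_run_node:
  assumes "v \<in> V"
  shows "node_run (node v) = vertex_run v"
proof -
  have "Min (vertex_run v) \<in> vertex_run v"
    using finite_vertex_run vertex_run_nonempty[OF assms] by (rule Min_in)
  then have "run (colour_indices (c v)) (Min (vertex_run v)) = vertex_run v"
    unfolding vertex_run_def by (rule run_eq_if_mem)
  then show ?thesis unfolding node_run_def node_start_def node_colour_def node_def by simp
qed

lemma node_run_nonempty: "x \<in> nodes \<Longrightarrow> node_run x \<noteq> {}"
  unfolding nodes_def using node_run_node vertex_run_nonempty by auto

lemma node_run_eq_atLeastAtMost:
  assumes "x \<in> nodes"
  shows "node_run x = {node_start x..node_end x}"
proof -
  obtain v where v: "v \<in> V" "x = node v" using assms unfolding nodes_def by blast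
  have "l v \<in> colour_indices (c v)" using span[OF v(1)] v(1) unfolding colour_indices_def by blast
  then have "vertex_run v = {Min (vertex_run v)..Max (vertex_run v)}"
    unfolding vertex_run_def by (rule run_eq_atLeastAtMost[OF finite_colour_indices])
  then show ?thesis using v node_run_node unfolding node_end_def node_start_def node_def by simp
qed

lemma node_eq_if_vertex_runs_meet:
  assumes "c u = c v" "m \<in> vertex_run u" "m \<in> vertex_run v"
  shows "node u = node v"
proof -
  have "vertex_run u = run (colour_indices (c u)) m" "vertex_run v = run (colour_indices (c v)) m"
    using run_eq_if_mem assms(2,3) unfolding vertex_run_def by auto
  then show ?thesis unfolding node_def using assms(1) by simp
qed

lemma graph_hom_node: "graph_hom V E nodes adj node"
  unfolding graph_hom_def
proof (intro conjI allI impI ballI)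
  fix v assume "v \<in> V" then show "node v \<in> nodes" unfolding nodes_def by simp
next
  fix u v assume e: "E u v"
  then have uv: "u \<in> V" "v \<in> V" using graph unfolding fin_graph_def by auto
  have "c u \<noteq> c v" using ff e unfolding ff_coloring_def by auto
  then have "node u \<noteq> node v" by (metis node_colour_node)
  moreover obtain k where "k < length Bs" "u \<in> Bs ! k" "v \<in> Bs ! k"
    using decomp e unfolding path_decomp_def by blast
  then have "k \<in> vertex_run u" "k \<in> vertex_run v"
    using uv span by (auto intro: mem_vertex_run)
  then have "k \<in> node_run (node u) \<inter> node_run (node v)" using uv by (simp add: node_run_node)
  ultimately show "adj (node u) (node v)" unfolding adj_def nodes_def using uv by blast
qed

lemma ff_coloring_node_colour: "ff_coloring nodes adj node_colour"
  unfolding ff_coloring_def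
proof (intro conjI allI impI ballI)
  fix x assume "x \<in> nodes"
  then show "1 \<le> node_colour x" using ff unfolding nodes_def ff_coloring_def by auto
next
  fix x y assume xy: "adj x y"
  then obtain u v where uv: "u \<in> V" "v \<in> V" "x = node u" "y = node v"
    unfolding adj_def nodes_def by auto
  obtain m where m: "m \<in> vertex_run u" "m \<in> vertex_run v"
    using xy uv unfolding adj_def by (auto simp: node_run_node)
  show "node_colour x \<noteq> node_colour y"
  proof
    assume "node_colour x = node_colour y"
    then have "node u = node v" using uv m by (auto intro: node_eq_if_vertex_runs_meet)
    then show False using xy uv unfolding adj_def by simp
  qed
next
  fix x j assume "x \<in> nodes" and j: "1 \<le> j \<and> j < node_colour x"
  then obtain v where v: "v \<in> V" "x = node v" unfolding nodes_def by auto
  have "1 \<le> j \<and> j < c v" using j v by simp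
  then obtain u where "E v u" "c u = j" using ff v(1) unfolding ff_coloring_def by blast
  then have "adj x (node u) \<and> node_colour (node u) = j"
    using graph_hom_node v(2) unfolding graph_hom_def by simp
  then show "\<exists>y. adj x y \<and> node_colour y = j" by blast
qed

lemma node_colour_image: "node_colour ` nodes = c ` V"
  unfolding nodes_def image_image by simp

lemma finite_nodes: "finite nodes"
  using graph unfolding nodes_def fin_graph_def by simp

lemma interval_graph_nodes: "interval_graph nodes adj"
proof (rule interval_graph_of_nat_intervals)
  show "finite nodes" by (rule finite_nodes)
  show "node_start x \<le> node_end x" if "x \<in> nodes" for x
    using node_run_eq_atLeastAtMost[OF that] node_run_nonempty[OF that] by simp
  show "inj_on (\<lambda>x. (node_colour x, node_start x)) nodes"
    unfolding node_colour_def node_start_def using inj_prod_decode by simp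
  show "adj x y \<longleftrightarrow> x \<in> nodes \<and> y \<in> nodes \<and> x \<noteq> y \<and>
          {node_start x..node_end x} \<inter> {node_start y..node_end y} \<noteq> {}" for x y
  proof (cases "x \<in> nodes \<and> y \<in> nodes")
    case True
    then show ?thesis unfolding adj_def using node_run_eq_atLeastAtMost by simp
  next
    case False
    then show ?thesis unfolding adj_def by blast
  qed
qed

lemma clique_common_index:
  assumes K: "K \<subseteq> nodes" "K \<noteq> {}" and clique: "\<forall>x\<in>K. \<forall>y\<in>K. x \<noteq> y \<longrightarrow> adj x y"
  obtains m where "\<And>x. x \<in> K \<Longrightarrow> m \<in> node_run x"
proof -
  have "node_start x \<le> node_end y" if "x \<in> K" "y \<in> K" for x y
  proof -
    have "node_run x \<inter> node_run y \<noteq> {}"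
      using that K clique node_run_nonempty unfolding adj_def by (cases "x = y") auto
    then obtain z where "z \<in> node_run x" "z \<in> node_run y" by blast
    moreover have "x \<in> nodes" "y \<in> nodes" using that K by auto
    ultimately have "node_start x \<le> z" "z \<le> node_end y" by (simp_all add: node_run_eq_atLeastAtMost)
    then show ?thesis by simp
  qed
  then obtain m where m: "\<forall>x\<in>K. node_start x \<le> m \<and> m \<le> node_end x"
    using common_point_if_intervals_pairwise_meet[OF finite_subset[OF K(1) finite_nodes] K(2)] by blast
  show thesis
  proof (rule that)
    fix x assume "x \<in> K"
    then show "m \<in> node_run x" using m K(1) node_run_eq_atLeastAtMost by auto
  qed
qed

lemma clique_card_le_bag:
  assumes K: "K \<subseteq> nodes" and clique: "\<forall>x\<in>K. \<forall>y\<in>K. x \<noteq> y \<longrightarrow> adj x y"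
  shows "\<exists>B\<in>set Bs. card K \<le> card B"
proof (cases "K = {}")
  case True
  have "hd Bs \<in> set Bs" using decomp unfolding path_decomp_def by simp
  with True show ?thesis by auto
next
  case False
  then obtain m where m: "\<And>x. x \<in> K \<Longrightarrow> m \<in> node_run x"
    using clique_common_index[OF K] clique by blast
  have "\<exists>w\<in>V. c w = node_colour x \<and> l w \<le> m \<and> m \<le> r w" if "x \<in> K" for x
    using m[OF that] run_subset unfolding node_run_def colour_indices_def by blast
  then obtain w where w: "\<And>x. x \<in> K \<Longrightarrow> w x \<in> V \<and> c (w x) = node_colour x \<and> l (w x) \<le> m \<and> m \<le> r (w x)"
    by metis
  have "m < length Bs" using False w span by (meson ex_in_conv le_less_trans)
  then have bag: "w ` K \<subseteq> Bs ! m" and "Bs ! m \<in> set Bs" using w span by auto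
  have "inj_on w K"
  proof (rule inj_onI)
    fix x y assume "x \<in> K" "y \<in> K" "w x = w y"
    then have "node_colour x = node_colour y" using w by metis
    then show "x = y" using \<open>x \<in> K\<close> \<open>y \<in> K\<close> clique ff_coloring_node_colour
      unfolding ff_coloring_def by blast
  qed
  moreover have "finite (Bs ! m)"
    using \<open>Bs ! m \<in> set Bs\<close> decomp graph unfolding path_decomp_def fin_graph_def
    by (meson finite_subset)
  ultimately have "card K \<le> card (Bs ! m)" using bag by (metis card_image card_mono)
  with \<open>Bs ! m \<in> set Bs\<close> show ?thesis by blast
qed

end

theorem theorem3:
  fixes V :: "'a set" and E :: "'a \<Rightarrow> 'a \<Rightarrow> bool" and p :: int
  assumes "fin_graph V E"
    and "pathwidth V E = p"
  shows "\<exists>(W :: nat set) F f. interval_graph W F \<and> graph_hom V E W F f \<and>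
           int (clique_number W F) \<le> p + 1 \<and> FF V E \<le> FF W F"
proof -
  obtain Bs where Bs: "path_decomp V E Bs" "pd_width Bs = p"
    using pathwidth_attained[OF assms(1)] assms(2) by blast
  obtain c where c: "ff_coloring V E c" "FF V E = card (c ` V)"
    using FF_attained[OF assms(1)] by blast
  obtain l r where span: "\<And>v. v \<in> V \<Longrightarrow> l v \<le> r v \<and> r v < length Bs \<and>
      (\<forall>k<length Bs. v \<in> Bs ! k \<longleftrightarrow> l v \<le> k \<and> k \<le> r v)"
    using path_decomp_spans[OF Bs(1)] by metis
  interpret coloured_path_decomp V E Bs c l r
    by unfold_locales (fact assms(1) Bs(1) c(1) span)+
  obtain K where K: "K \<subseteq> nodes" "\<forall>x\<in>K. \<forall>y\<in>K. x \<noteq> y \<longrightarrow> adj x y"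
    and "card K = clique_number nodes adj"
    by (rule clique_number_attained[OF finite_nodes])
  moreover obtain B where "B \<in> set Bs" "card K \<le> card B"
    using clique_card_le_bag[OF K] by blast
  ultimately have "int (clique_number nodes adj) \<le> p + 1"
    using card_le_pd_width[of B Bs] Bs(2) by linarith
  moreover have "FF V E \<le> FF nodes adj"
    using card_image_le_FF[OF finite_nodes ff_coloring_node_colour] c(2) node_colour_image by simp
  ultimately show ?thesis using interval_graph_nodes graph_hom_node by blast
qed

end
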